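(* Let $T$ be a bounded, linear, positive operator on $L^2(G,\mathbb{C}^{s\times r})$ that is adjointable with respect to the matrix-valued inner product, and let $\{E_k\}_{k\in\mathbb{N}}$ be a matrix-valued orthonormal basis for $L^2(G,\mathbb{C}^{s\times r})$. Then for every $n\in\mathbb{N}$, $\{(I+T+T^2+\cdots+T^n)E_k\}_{k\in\mathbb{N}}$ is a matrix-valued Riesz basis for $L^2(G,\mathbb{C}^{s\times r})$, where $I$ is the identity operator.
   Context: $G$ is a locally compact abelian group that is metrizable and $\sigma$-compact, with Haar measure $\mu_G$; $s,r\in\mathbb{N}$. $L^2(G,\mathbb{C}^{s\times r})$ is the space of $s\times r$ matrices $\mathbf{f}=[f_{ij}]$ with all entries in $L^2(G)$. The matrix-valued inner product is $\langle \mathbf{f},\mathbf{g}\rangle=\int_G \mathbf{f}(x)\mathbf{g}^*(x)\,d\mu_G\in M_s(\mathbb{C})$ (entrywise integral). $L^2(G,\mathbb{C}^{s\times r})$ is a Hilbert space with inner product $\langle \mathbf{f},\mathbf{g}\rangle_{L^2}=\mathrm{tr}\langle \mathbf{f},\mathbf{g}\rangle$ and Frobenius norm $\|\mathbf{f}\|=(\sum_{i,j}\int_G|f_{ij}|^2d\mu_G)^{1/2}$; $U^*$ denotes the Hilbert-adjoint with respect to this inner product. $U$ is adjointable with respect to the matrix-valued inner product if $\langle U\mathbf{f},\mathbf{g}\rangle=\langle\mathbf{f},U^*\mathbf{g}\rangle$ for all $\mathbf{f},\mathbf{g}$. A bounded operator $T$ is positive if $T^*=T$ and $\mathrm{tr}\langle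 T\mathbf{f},\mathbf{f}\rangle\ge0$ for all $\mathbf{f}$. A matrix-valued orthonormal basis is a sequence $\{E_k\}_{k\in\mathbb{N}}$ with $\langle E_k,E_j\rangle=\mathbf{I}_{s\times s}$ if $k=j$ and $\mathbf{O}_{s\times s}$ otherwise, such that $\mathbf{f}=\sum_k\langle\mathbf{f},E_k\rangle E_k$ in Frobenius norm for all $\mathbf{f}$. A matrix-valued Riesz basis is a family $\{UE_k\}_{k\in\mathbb{N}}$ with $\{E_k\}$ a matrix-valued orthonormal basis and $U$ bounded, linear, bijective and adjointable with respect to the matrix-valued inner product. *)

theory Defs
  imports "HOL-Analysis.Analysis"
begin

text \<open>G is a locally compact abelian group, metrizable (its topology comes from a metric,
  modelled by the metric_space type class) and sigma-compact.\<close>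

definition lca_metrizable_sigma_compact :: "'g::{ab_group_add, metric_space} itself \<Rightarrow> bool" where
  "lca_metrizable_sigma_compact _ \<longleftrightarrow>
     continuous_on UNIV (\<lambda>p::'g \<times> 'g. fst p + snd p) \<and>
     continuous_on UNIV (\<lambda>x::'g. - x) \<and>
     locally_compact_space (euclidean :: 'g topology) \<and>
     (\<exists>K :: nat \<Rightarrow> 'g set. (\<forall>n. compact (K n)) \<and> (\<Union>n. K n) = UNIV)"

definition haar_measure :: "'g::{ab_group_add, metric_space} measure \<Rightarrow> bool" where
  "haar_measure M \<longleftrightarrow>
     sets M = sets borel \<and> space M = UNIV \<and>
     (\<forall>a A. A \<in> sets M \<longrightarrow> emeasure M ((\<lambda>x. a + x) ` A) = emeasure M A) \<and>
     (\<forall>K. compact K \<longrightarrow> emeasure M K < \<infinity>) \<and>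
     (\<forall>U. open U \<and> U \<noteq> {} \<longrightarrow> 0 < emeasure M U) \<and>
     (\<forall>A \<in> sets M. emeasure M A = (INF U \<in> {U. open U \<and> A \<subseteq> U}. emeasure M U)) \<and>
     (\<forall>U. open U \<longrightarrow> emeasure M U = (SUP K \<in> {K. compact K \<and> K \<subseteq> U}. emeasure M K))"

text \<open>Elements are functions G -> complex s x r matrices (type complex^'r^'s), all of whose
  entries are square integrable; elements are identified up to equality almost everywhere.\<close>

definition L2M :: "'g measure \<Rightarrow> ('g \<Rightarrow> complex^'r^'s) set" where
  "L2M M = {f. \<forall>i j. (\<lambda>x. f x $ i $ j) \<in> borel_measurable M \<and>
                    integrable M (\<lambda>x. (cmod (f x $ i $ j))^2)}"

definition aeq :: "'g measure \<Rightarrow> ('g \<Rightarrow> 'b) \<Rightarrow> ('g \<Rightarrow> 'b) \<Rightarrow> bool" where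
  "aeq M f g \<longleftrightarrow> (AE x in M. f x = g x)"

definition cadj :: "complex^'r^'s \<Rightarrow> complex^'s^'r" where
  "cadj A = (\<chi> i j. cnj (A $ j $ i))"

definition cscale :: "complex \<Rightarrow> complex^'r^'s \<Rightarrow> complex^'r^'s" where
  "cscale a A = (\<chi> i j. a * A $ i $ j)"

definition mip :: "'g measure \<Rightarrow> ('g \<Rightarrow> complex^'r^'s) \<Rightarrow> ('g \<Rightarrow> complex^'r^'s) \<Rightarrow> complex^'s^'s" where
  "mip M f g = (\<chi> i k. LINT x|M. (f x ** cadj (g x)) $ i $ k)"

definition hip :: "'g measure \<Rightarrow> ('g \<Rightarrow> complex^'r^'s) \<Rightarrow> ('g \<Rightarrow> complex^'r^'s) \<Rightarrow> complex" where
  "hip M f g = trace (mip M f g)"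

definition fnorm :: "'g measure \<Rightarrow> ('g \<Rightarrow> complex^'r^'s) \<Rightarrow> real" where
  "fnorm M f = sqrt (\<Sum>i\<in>UNIV. \<Sum>j\<in>UNIV. LINT x|M. (cmod (f x $ i $ j))^2)"

text \<open>An operator is represented by a map on representatives which maps L^2 into L^2 and
  respects equality almost everywhere (so it is a map on the equivalence classes).\<close>
definition op_on :: "'g measure \<Rightarrow> (('g \<Rightarrow> complex^'r^'s) \<Rightarrow> ('g \<Rightarrow> complex^'r^'s)) \<Rightarrow> bool" where
  "op_on M U \<longleftrightarrow> (\<forall>f \<in> L2M M. U f \<in> L2M M) \<and>
     (\<forall>f \<in> L2M M. \<forall>g \<in> L2M M. aeq M f g \<longrightarrow> aeq M (U f) (U g))"

definition op_linear :: "'g measure \<Rightarrow> (('g \<Rightarrow> complex^'r^'s) \<Rightarrow> ('g \<Rightarrow> complex^'r^'s)) \<Rightarrow> bool" where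
  "op_linear M U \<longleftrightarrow> (\<forall>a f g. f \<in> L2M M \<longrightarrow> g \<in> L2M M \<longrightarrow>
      aeq M (U (\<lambda>x. cscale a (f x) + g x)) (\<lambda>x. cscale a (U f x) + U g x))"

definition op_bounded :: "'g measure \<Rightarrow> (('g \<Rightarrow> complex^'r^'s) \<Rightarrow> ('g \<Rightarrow> complex^'r^'s)) \<Rightarrow> bool" where
  "op_bounded M U \<longleftrightarrow> (\<exists>C. \<forall>f \<in> L2M M. fnorm M (U f) \<le> C * fnorm M f)"

definition op_bij :: "'g measure \<Rightarrow> (('g \<Rightarrow> complex^'r^'s) \<Rightarrow> ('g \<Rightarrow> complex^'r^'s)) \<Rightarrow> bool" where
  "op_bij M U \<longleftrightarrow>
     (\<forall>f \<in> L2M M. \<forall>g \<in> L2M M. aeq M (U f) (U g) \<longrightarrow> aeq M f g) \<and>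
     (\<forall>g \<in> L2M M. \<exists>f \<in> L2M M. aeq M (U f) g)"

definition op_adjointable :: "'g measure \<Rightarrow> (('g \<Rightarrow> complex^'r^'s) \<Rightarrow> ('g \<Rightarrow> complex^'r^'s)) \<Rightarrow> bool" where
  "op_adjointable M U \<longleftrightarrow> (\<exists>V. op_on M V \<and>
     (\<forall>f \<in> L2M M. \<forall>g \<in> L2M M. mip M (U f) g = mip M f (V g)))"

definition op_positive :: "'g measure \<Rightarrow> (('g \<Rightarrow> complex^'r^'s) \<Rightarrow> ('g \<Rightarrow> complex^'r^'s)) \<Rightarrow> bool" where
  "op_positive M T \<longleftrightarrow>
     (\<forall>f \<in> L2M M. \<forall>g \<in> L2M M. hip M (T f) g = hip M f (T g)) \<and>
     (\<forall>f \<in> L2M M. Im (hip M (T f) f) = 0 \<and> 0 \<le> Re (hip M (T f) f))"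

definition mv_onb :: "'g measure \<Rightarrow> (nat \<Rightarrow> ('g \<Rightarrow> complex^'r^'s)) \<Rightarrow> bool" where
  "mv_onb M E \<longleftrightarrow> (\<forall>k. E k \<in> L2M M) \<and>
     (\<forall>k j. mip M (E k) (E j) = (if k = j then mat 1 else 0)) \<and>
     (\<forall>f \<in> L2M M. (\<lambda>n. fnorm M (\<lambda>x. f x - (\<Sum>k<n. mip M f (E k) ** E k x))) \<longlonglongrightarrow> 0)"

definition mv_riesz_basis :: "'g measure \<Rightarrow> (nat \<Rightarrow> ('g \<Rightarrow> complex^'r^'s)) \<Rightarrow> bool" where
  "mv_riesz_basis M F \<longleftrightarrow> (\<exists>E U. mv_onb M E \<and> op_on M U \<and> op_linear M U \<and>
     op_bounded M U \<and> op_bij M U \<and> op_adjointable M U \<and> (\<forall>k. aeq M (F k) (U (E k))))"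

end

theory Submission
  imports Defs
begin

(* Put S = I + T + ... + T^n.  Boundedness, linearity and adjointability pass from T to its
   powers and to finite sums of operators (an adjoint of S is V^0 + ... + V^n for an adjoint V
   of T).  Positivity of T gives positivity of every power, since <T^(2j) h, h> = |T^j h|^2 and
   <T^(2j+1) h, h> = <T T^j h, T^j h>; hence Re tr <S h, h> >= |h|^2, i.e. S is coercive.  A
   bounded coercive operator on the complete space L^2 is bijective: injectivity is immediate,
   and S f = g is solved by the Richardson iteration, whose residuals contract geometrically.
   Thus S maps the orthonormal basis {E_k} onto a Riesz basis. *)

lemma borel_measurable_matrix_iff:
  fixes f :: "'g \<Rightarrow> complex^'r^'s"
  shows "f \<in> borel_measurable M \<longleftrightarrow> (\<forall>i j. (\<lambda>x. f x $ i $ j) \<in> borel_measurable M)"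
proof
  assume f: "f \<in> borel_measurable M"
  show "\<forall>i j. (\<lambda>x. f x $ i $ j) \<in> borel_measurable M"
  proof (intro allI)
    fix i j
    have "continuous_on UNIV (\<lambda>A::complex^'r^'s. A $ i $ j)"
      by (intro continuous_intros)
    from measurable_compose[OF f borel_measurable_continuous_onI[OF this]]
    show "(\<lambda>x. f x $ i $ j) \<in> borel_measurable M" .
  qed
next
  assume entries: "\<forall>i j. (\<lambda>x. f x $ i $ j) \<in> borel_measurable M"
  show "f \<in> borel_measurable M"
  proof (rule borel_measurable_euclidean_space[THEN iffD2], rule ballI)
    fix b :: "complex^'r^'s" assume "b \<in> Basis"
    then obtain i j d where d: "d \<in> (Basis::complex set)" and b: "b = axis i (axis j d)"
      unfolding Basis_vec_def by auto
    have "(\<lambda>x. f x $ i $ j) \<in> borel_measurable M"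
      using entries by blast
    then have "(\<lambda>x. inner (f x $ i $ j) d) \<in> borel_measurable M"
      by measurable
    moreover have "inner (f x) b = inner (f x $ i $ j) d" for x
      using b by (simp add: inner_axis)
    ultimately show "(\<lambda>x. inner (f x) b) \<in> borel_measurable M"
      by simp
  qed
qed

lemma norm_matrix_power2: "(norm (A::complex^'r^'s))^2 = (\<Sum>i\<in>UNIV. \<Sum>j\<in>UNIV. (cmod (A$i$j))^2)"
  unfolding norm_vec_def L2_set_def by (simp add: sum_nonneg)

lemma norm_matrix_entry_le: "cmod (A $ i $ j) \<le> norm (A::complex^'r^'s)"
  by (meson Finite_Cartesian_Product.norm_nth_le order_trans)

lemma L2M_iff:
  "f \<in> L2M M \<longleftrightarrow> f \<in> borel_measurable M \<and> integrable M (\<lambda>x. (norm (f x))^2)"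
proof
  assume f: "f \<in> L2M M"
  then have "integrable M (\<lambda>x. \<Sum>i\<in>UNIV. \<Sum>j\<in>UNIV. (cmod (f x $i$j))^2)"
    unfolding L2M_def by (intro Bochner_Integration.integrable_sum) auto
  moreover have "f \<in> borel_measurable M"
    using f unfolding L2M_def borel_measurable_matrix_iff by blast
  ultimately show "f \<in> borel_measurable M \<and> integrable M (\<lambda>x. (norm (f x))^2)"
    by (simp add: norm_matrix_power2)
next
  assume f: "f \<in> borel_measurable M \<and> integrable M (\<lambda>x. (norm (f x))^2)"
  then have m: "(\<lambda>x. f x $ i $ j) \<in> borel_measurable M" for i j
    by (simp add: borel_measurable_matrix_iff)
  have "integrable M (\<lambda>x. (cmod (f x $ i $ j))^2)" for i j
  proof (rule Bochner_Integration.integrable_bound)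
    show "integrable M (\<lambda>x. (norm (f x))^2)" using f by blast
    show "(\<lambda>x. (cmod (f x $ i $ j))^2) \<in> borel_measurable M" using m[of i j] by measurable
    show "AE x in M. norm ((cmod (f x $ i $ j))^2) \<le> norm ((norm (f x))^2)"
      by (auto intro!: power_mono norm_matrix_entry_le)
  qed
  then show "f \<in> L2M M" using m unfolding L2M_def by auto
qed

lemma fnorm_altdef:
  assumes "f \<in> L2M M"
  shows "fnorm M f = sqrt (LINT x|M. (norm (f x))^2)"
proof -
  have integrable: "\<And>i j. integrable M (\<lambda>x. (cmod (f x $ i $ j))^2)"
    using assms unfolding L2M_def by auto
  then have "(LINT x|M. (norm (f x))^2) = (\<Sum>i\<in>UNIV. LINT x|M. (\<Sum>j\<in>UNIV. (cmod (f x $i$j))^2))"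
    unfolding norm_matrix_power2 by (intro Bochner_Integration.integral_sum Bochner_Integration.integrable_sum)
  also have "\<dots> = (\<Sum>i\<in>UNIV. \<Sum>j\<in>UNIV. LINT x|M. (cmod (f x $i$j))^2)"
    using integrable by (intro sum.cong refl Bochner_Integration.integral_sum)
  finally show ?thesis unfolding fnorm_def by simp
qed

section \<open>L2M as a real inner product space\<close>

lemma norm_cscale: "norm (cscale a (A::complex^'r^'s)) = cmod a * norm A"
proof -
  have "(norm (cscale a A))^2 = (cmod a * norm A)^2"
    by (simp add: norm_matrix_power2 cscale_def power_mult_distrib norm_mult sum_distrib_left)
  then show ?thesis
    by (simp add: power2_eq_iff_nonneg)
qed

lemma cscale_of_real: "cscale (complex_of_real t) A = t *\<^sub>R A"
  by (simp add: cscale_def vec_eq_iff) (simp add: scaleR_conv_of_real)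

lemma cscale_sum: "cscale a (\<Sum>i\<in>I. A i) = (\<Sum>i\<in>I. cscale a (A i))"
  by (simp add: cscale_def vec_eq_iff sum_distrib_left)

lemma cscale_minus_one: "cscale (-1) A = - (A::complex^'r^'s)"
  by (simp add: cscale_def vec_eq_iff)

lemma L2M_zero: "(\<lambda>x. 0) \<in> L2M M"
  unfolding L2M_iff by simp

lemma L2M_add:
  assumes "f \<in> L2M M" and "g \<in> L2M M"
  shows "(\<lambda>x. f x + g x) \<in> L2M M"
  unfolding L2M_iff
proof
  show m: "(\<lambda>x. f x + g x) \<in> borel_measurable M"
    using assms by (auto simp: L2M_iff)
  have bound: "(norm (a + b))^2 \<le> 2 * (norm a)^2 + 2 * (norm b)^2" for a b :: "complex^'r^'s"
  proof -
    have "(norm (a + b))^2 \<le> (norm a + norm b)^2"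
      by (simp add: power_mono norm_triangle_ineq)
    also have "\<dots> \<le> 2 * (norm a)^2 + 2 * (norm b)^2"
      using sum_squares_bound[of "norm a" "norm b"] by (simp add: power2_sum)
    finally show ?thesis .
  qed
  show "integrable M (\<lambda>x. (norm (f x + g x))^2)"
  proof (rule Bochner_Integration.integrable_bound)
    show "integrable M (\<lambda>x. 2 * (norm (f x))^2 + 2 * (norm (g x))^2)"
      using assms by (simp add: L2M_iff)
    show "(\<lambda>x. (norm (f x + g x))^2) \<in> borel_measurable M"
      using m by measurable
  qed (simp add: bound)
qed

lemma L2M_cscale:
  assumes "f \<in> L2M M"
  shows "(\<lambda>x. cscale a (f x)) \<in> L2M M"
  unfolding L2M_iff
proof
  have "(\<lambda>x. f x $ i $ j) \<in> borel_measurable M" for i j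
    using assms by (simp add: L2M_def)
  then show "(\<lambda>x. cscale a (f x)) \<in> borel_measurable M"
    by (auto simp: borel_measurable_matrix_iff cscale_def)
  show "integrable M (\<lambda>x. (norm (cscale a (f x)))^2)"
    using assms by (simp add: L2M_iff norm_cscale power_mult_distrib)
qed

lemma L2M_scaleR: "f \<in> L2M M \<Longrightarrow> (\<lambda>x. t *\<^sub>R f x) \<in> L2M M"
  using L2M_cscale[of f M "complex_of_real t"] by (simp add: cscale_of_real)

lemma L2M_diff: "f \<in> L2M M \<Longrightarrow> g \<in> L2M M \<Longrightarrow> (\<lambda>x. f x - g x) \<in> L2M M"
  using L2M_add[of f M "\<lambda>x. (-1) *\<^sub>R g x"] L2M_scaleR[of g M "-1"] by simp

lemma L2M_sum: "(\<And>i. i \<in> I \<Longrightarrow> h i \<in> L2M M) \<Longrightarrow> (\<lambda>x. \<Sum>i\<in>I. h i x) \<in> L2M M"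
proof (induction I rule: infinite_finite_induct)
  case (insert a F)
  then show ?case using L2M_add[of "h a" M "\<lambda>x. \<Sum>i\<in>F. h i x"] by simp
qed (simp_all add: L2M_zero)

lemma integrable_if_norm_le_product:
  fixes \<phi> :: "'g \<Rightarrow> 'b::{banach, second_countable_topology}"
  assumes "\<phi> \<in> borel_measurable M" and f: "f \<in> L2M M" and g: "g \<in> L2M M"
    and le: "\<And>x. norm (\<phi> x) \<le> norm (f x) * norm (g x)"
  shows "integrable M \<phi>"
proof (rule Bochner_Integration.integrable_bound)
  show "integrable M (\<lambda>x. ((norm (f x))^2 + (norm (g x))^2) / 2)"
    using f g unfolding L2M_iff
    by (intro Bochner_Integration.integrable_divide Bochner_Integration.integrable_add) blast+
  show "AE x in M. norm (\<phi> x) \<le> norm (((norm (f x))^2 + (norm (g x))^2) / 2)"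
  proof (rule AE_I2)
    fix x
    have "norm (\<phi> x) \<le> ((norm (f x))^2 + (norm (g x))^2) / 2"
      using le[of x] sum_squares_bound[of "norm (f x)" "norm (g x)"] by simp
    then show "norm (\<phi> x) \<le> norm (((norm (f x))^2 + (norm (g x))^2) / 2)"
      by simp
  qed
qed fact

definition L2_inner :: "'g measure \<Rightarrow> ('g \<Rightarrow> complex^'r^'s) \<Rightarrow> ('g \<Rightarrow> complex^'r^'s) \<Rightarrow> real" where
  "L2_inner M f g = (LINT x|M. inner (f x) (g x))"

lemma integrable_inner_L2M:
  assumes f: "f \<in> L2M M" and g: "g \<in> L2M M"
  shows "integrable M (\<lambda>x. inner (f x) (g x))"
proof (rule integrable_if_norm_le_product[OF _ f g])
  show "(\<lambda>x. inner (f x) (g x)) \<in> borel_measurable M"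
    using f g unfolding L2M_iff by (intro borel_measurable_inner) blast+
qed (simp add: Cauchy_Schwarz_ineq2)

lemma L2_inner_commute: "L2_inner M f g = L2_inner M g f"
  by (simp add: L2_inner_def inner_commute)

lemma L2_inner_sum_left:
  "finite I \<Longrightarrow> (\<And>i. i \<in> I \<Longrightarrow> f i \<in> L2M M) \<Longrightarrow> g \<in> L2M M \<Longrightarrow>
   L2_inner M (\<lambda>x. \<Sum>i\<in>I. f i x) g = (\<Sum>i\<in>I. L2_inner M (f i) g)"
  unfolding L2_inner_def inner_sum_left
  by (intro Bochner_Integration.integral_sum integrable_inner_L2M) auto

lemma fnorm_nonneg: "f \<in> L2M M \<Longrightarrow> 0 \<le> fnorm M f"
  by (simp add: fnorm_altdef)

lemma fnorm_power2: "f \<in> L2M M \<Longrightarrow> (fnorm M f)^2 = (LINT x|M. (norm (f x))^2)"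
  by (simp add: fnorm_altdef)

lemma L2_inner_self: "f \<in> L2M M \<Longrightarrow> L2_inner M f f = (fnorm M f)^2"
  by (simp add: fnorm_power2 L2_inner_def power2_norm_eq_inner)

lemma norm_diff_scaleR_power2:
  "(norm (a - t *\<^sub>R b))^2 = (norm a)^2 - 2 * t * inner a b + t^2 * (norm (b::'a::real_inner))^2"
proof -
  have "(norm (a - t *\<^sub>R b))^2 = inner (a - t *\<^sub>R b) (a - t *\<^sub>R b)"
    by (simp only: power2_norm_eq_inner)
  also have "\<dots> = inner a a - 2 * t * inner a b + t^2 * inner b b"
    by (simp add: inner_diff_left inner_diff_right inner_commute[of b a] power2_eq_square algebra_simps)
  finally show ?thesis
    by (simp only: power2_norm_eq_inner)
qed

lemma fnorm_diff_scaleR_power2: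
  assumes f: "f \<in> L2M M" and g: "g \<in> L2M M"
  shows "(fnorm M (\<lambda>x. f x - t *\<^sub>R g x))^2
       = (fnorm M f)^2 - 2 * t * L2_inner M f g + t^2 * (fnorm M g)^2"
proof -
  have "(fnorm M (\<lambda>x. f x - t *\<^sub>R g x))^2
      = (LINT x|M. ((norm (f x))^2 - (2 * t) * inner (f x) (g x)) + t^2 * (norm (g x))^2)"
    by (simp add: fnorm_power2 L2M_diff L2M_scaleR f g norm_diff_scaleR_power2)
  also have "\<dots> = (fnorm M f)^2 - 2 * t * L2_inner M f g + t^2 * (fnorm M g)^2"
    using f g integrable_inner_L2M[OF f g] unfolding L2M_iff
    by (simp add: fnorm_power2 L2_inner_def L2M_iff Bochner_Integration.integral_add
        Bochner_Integration.integral_diff Bochner_Integration.integrable_diff)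
  finally show ?thesis .
qed

lemma quadratic_nonneg_discriminant:
  fixes a b c :: real
  assumes "a \<ge> 0" and nonneg: "\<And>t. 0 \<le> a * t^2 + b * t + c"
  shows "b^2 \<le> 4 * a * c"
proof (cases "a = 0")
  case True
  have "b = 0"
  proof (rule ccontr)
    assume "b \<noteq> 0"
    then show False using nonneg[of "- (c + 1) / b"] True by simp
  qed
  then show ?thesis using True by simp
next
  case False
  then have "a > 0" using assms(1) by simp
  have "0 \<le> a * (- b / (2 * a))^2 + b * (- b / (2 * a)) + c" by (rule nonneg)
  also have "\<dots> = c - b^2 / (4 * a)" using \<open>a > 0\<close> by (simp add: field_simps power2_eq_square)
  finally show ?thesis using \<open>a > 0\<close> by (simp add: field_simps)
qed

lemma L2_inner_Cauchy_Schwarz: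
  assumes f: "f \<in> L2M M" and g: "g \<in> L2M M"
  shows "\<bar>L2_inner M f g\<bar> \<le> fnorm M f * fnorm M g"
proof (rule power2_le_imp_le)
  have "(fnorm M g)^2 * t^2 + (- 2 * L2_inner M f g) * t + (fnorm M f)^2
      = (fnorm M (\<lambda>x. f x - t *\<^sub>R g x))^2" for t
    using fnorm_diff_scaleR_power2[OF f g, of t] by (simp add: algebra_simps)
  then have "0 \<le> (fnorm M g)^2 * t^2 + (- 2 * L2_inner M f g) * t + (fnorm M f)^2" for t
    by simp
  from quadratic_nonneg_discriminant[OF _ this]
  show "\<bar>L2_inner M f g\<bar>^2 \<le> (fnorm M f * fnorm M g)^2"
    by (simp add: power_mult_distrib mult.commute)
  show "0 \<le> fnorm M f * fnorm M g"
    using f g by (simp add: fnorm_nonneg)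
qed

lemma fnorm_add_le:
  assumes f: "f \<in> L2M M" and g: "g \<in> L2M M"
  shows "fnorm M (\<lambda>x. f x + g x) \<le> fnorm M f + fnorm M g"
proof (rule power2_le_imp_le)
  have "(fnorm M (\<lambda>x. f x + g x))^2 = (fnorm M f)^2 + 2 * L2_inner M f g + (fnorm M g)^2"
    using fnorm_diff_scaleR_power2[OF f g, of "-1"] by simp
  also have "\<dots> \<le> (fnorm M f + fnorm M g)^2"
    using L2_inner_Cauchy_Schwarz[OF f g] by (simp add: power2_sum)
  finally show "(fnorm M (\<lambda>x. f x + g x))^2 \<le> (fnorm M f + fnorm M g)^2" .
  show "0 \<le> fnorm M f + fnorm M g"
    using f g by (simp add: fnorm_nonneg)
qed

lemma fnorm_sum_le:
  "finite I \<Longrightarrow> (\<And>i. i \<in> I \<Longrightarrow> h i \<in> L2M M) \<Longrightarrow>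
   fnorm M (\<lambda>x. \<Sum>i\<in>I. h i x) \<le> (\<Sum>i\<in>I. fnorm M (h i))"
proof (induction I rule: finite_induct)
  case (insert a F)
  then have "fnorm M (\<lambda>x. h a x + (\<Sum>i\<in>F. h i x)) \<le> fnorm M (h a) + fnorm M (\<lambda>x. \<Sum>i\<in>F. h i x)"
    by (intro fnorm_add_le L2M_sum) auto
  with insert show ?case by simp
qed (simp add: fnorm_def)

lemma fnorm_scaleR: "f \<in> L2M M \<Longrightarrow> fnorm M (\<lambda>x. t *\<^sub>R f x) = \<bar>t\<bar> * fnorm M f"
  using L2M_scaleR[of f M t] by (simp add: fnorm_altdef power_mult_distrib real_sqrt_mult)

lemma fnorm_diff_commute:
  "f \<in> L2M M \<Longrightarrow> g \<in> L2M M \<Longrightarrow> fnorm M (\<lambda>x. f x - g x) = fnorm M (\<lambda>x. g x - f x)"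
  using L2M_diff[of f M g] L2M_diff[of g M f] by (simp add: fnorm_altdef norm_minus_commute)

lemma aeq_refl: "aeq M f f"
  by (simp add: aeq_def)

lemma aeq_trans [trans]: "aeq M f g \<Longrightarrow> aeq M g h \<Longrightarrow> aeq M f h"
  by (auto simp: aeq_def elim: AE_mp)

lemma aeq_sum:
  assumes "finite I" and "\<And>i. i \<in> I \<Longrightarrow> aeq M (f i) (g i)"
  shows "aeq M (\<lambda>x. \<Sum>i\<in>I. f i x) (\<lambda>x. \<Sum>i\<in>I. g i x)"
proof -
  have "AE x in M. \<forall>i\<in>I. f i x = g i x"
    using assms by (intro AE_finite_allI) (auto simp: aeq_def)
  then show ?thesis
    unfolding aeq_def by (rule AE_mp) (intro AE_I2 impI sum.cong refl, blast)
qed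

lemma fnorm_cong:
  assumes f: "f \<in> L2M M" and g: "g \<in> L2M M" and "aeq M f g"
  shows "fnorm M f = fnorm M g"
proof -
  have "(LINT x|M. (norm (f x))^2) = (LINT x|M. (norm (g x))^2)"
    using assms unfolding aeq_def by (intro integral_cong_AE) (auto simp: L2M_iff elim: AE_mp)
  then show ?thesis
    using f g by (simp add: fnorm_altdef)
qed

lemma L2_inner_cong_left:
  assumes "f \<in> L2M M" and "g \<in> L2M M" and "h \<in> L2M M" and "aeq M f g"
  shows "L2_inner M f h = L2_inner M g h"
proof -
  have [measurable]: "f \<in> borel_measurable M" "g \<in> borel_measurable M" "h \<in> borel_measurable M"
    using assms(1-3) unfolding L2M_iff by blast+
  have "AE x in M. inner (f x) (h x) = inner (g x) (h x)"
    using \<open>aeq M f g\<close> unfolding aeq_def by (rule AE_mp) simp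
  then show ?thesis
    unfolding L2_inner_def by (intro integral_cong_AE) measurable
qed

lemma aeq_if_fnorm_diff_eq_0:
  assumes f: "f \<in> L2M M" and g: "g \<in> L2M M" and "fnorm M (\<lambda>x. f x - g x) = 0"
  shows "aeq M f g"
proof -
  have "(LINT x|M. (norm (f x - g x))^2) = 0"
    using assms by (simp add: fnorm_altdef L2M_diff)
  then have "AE x in M. (norm (f x - g x))^2 = 0"
    using L2M_diff[OF f g] by (subst (asm) integral_nonneg_eq_0_iff_AE) (auto simp: L2M_iff)
  then show ?thesis
    unfolding aeq_def by (auto elim: AE_mp)
qed

lemma integrable_entry_product:
  assumes f: "f \<in> L2M M" and g: "g \<in> L2M M"
  shows "integrable M (\<lambda>x. f x $ i $ j * cnj (g x $ k $ l))"
proof (rule integrable_if_norm_le_product[where f=f and g=g, OF _ f g])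
  have "(\<lambda>x. g x $ k $ l) \<in> borel_measurable M"
    using g by (simp add: L2M_def)
  then have "(\<lambda>x. cnj (g x $ k $ l)) \<in> borel_measurable M"
    by (rule measurable_compose) (intro borel_measurable_continuous_onI continuous_intros)
  moreover have "(\<lambda>x. f x $ i $ j) \<in> borel_measurable M"
    using f by (simp add: L2M_def)
  ultimately show "(\<lambda>x. f x $ i $ j * cnj (g x $ k $ l)) \<in> borel_measurable M"
    by (rule borel_measurable_times[rotated])
  show "norm (f x $ i $ j * cnj (g x $ k $ l)) \<le> norm (f x) * norm (g x)" for x
    by (simp add: norm_mult mult_mono norm_matrix_entry_le)
qed

lemma mip_entry: "mip M f g $ i $ k = (integral\<^sup>L M (\<lambda>x. \<Sum>j\<in>UNIV. f x $ i $ j * cnj (g x $ k $ j)))"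
  by (simp add: mip_def matrix_matrix_mult_def cadj_def)

lemma mip_sum_left:
  assumes "finite I" and "\<And>l. l \<in> I \<Longrightarrow> h l \<in> L2M M" and "g \<in> L2M M"
  shows "mip M (\<lambda>x. \<Sum>l\<in>I. h l x) g = (\<Sum>l\<in>I. mip M (h l) g)"
proof -
  have "mip M (\<lambda>x. \<Sum>l\<in>I. h l x) g $ i $ k = (\<Sum>l\<in>I. mip M (h l) g) $ i $ k" for i k
  proof -
    have "mip M (\<lambda>x. \<Sum>l\<in>I. h l x) g $ i $ k = (integral\<^sup>L M (\<lambda>x. \<Sum>l\<in>I. \<Sum>j\<in>UNIV. h l x $ i $ j * cnj (g x $ k $ j)))"
      unfolding mip_entry by (simp add: sum_distrib_right sum.swap[of _ UNIV I])
    also have "\<dots> = (\<Sum>l\<in>I. mip M (h l) g) $ i $ k"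
      using assms
      by (simp add: mip_entry Bochner_Integration.integral_sum Bochner_Integration.integrable_sum
          integrable_entry_product)
    finally show ?thesis .
  qed
  then show ?thesis by (simp add: vec_eq_iff)
qed

lemma mip_sum_right:
  assumes "finite I" and "\<And>l. l \<in> I \<Longrightarrow> h l \<in> L2M M" and "g \<in> L2M M"
  shows "mip M g (\<lambda>x. \<Sum>l\<in>I. h l x) = (\<Sum>l\<in>I. mip M g (h l))"
proof -
  have "mip M g (\<lambda>x. \<Sum>l\<in>I. h l x) $ i $ k = (\<Sum>l\<in>I. mip M g (h l)) $ i $ k" for i k
  proof -
    have "mip M g (\<lambda>x. \<Sum>l\<in>I. h l x) $ i $ k = (integral\<^sup>L M (\<lambda>x. \<Sum>l\<in>I. \<Sum>j\<in>UNIV. g x $ i $ j * cnj (h l x $ k $ j)))"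
      unfolding mip_entry by (simp add: sum_distrib_left sum.swap[of _ UNIV I])
    also have "\<dots> = (\<Sum>l\<in>I. mip M g (h l)) $ i $ k"
      using assms
      by (simp add: mip_entry Bochner_Integration.integral_sum Bochner_Integration.integrable_sum
          integrable_entry_product)
    finally show ?thesis .
  qed
  then show ?thesis by (simp add: vec_eq_iff)
qed

lemma Re_hip_eq_L2_inner:
  assumes f: "f \<in> L2M M" and g: "g \<in> L2M M"
  shows "Re (hip M f g) = L2_inner M f g"
proof -
  have row: "integrable M (\<lambda>x. \<Sum>j\<in>UNIV. f x $ i $ j * cnj (g x $ i $ j))" for i
    using f g by (simp add: Bochner_Integration.integrable_sum integrable_entry_product)
  have inner_matrix:
    "inner (A::complex^'r^'s) B = (\<Sum>i\<in>UNIV. Re (\<Sum>j\<in>UNIV. A $ i $ j * cnj (B $ i $ j)))" for A B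
    by (simp add: inner_vec_def inner_complex_def Re_sum)
  have "L2_inner M f g = (integral\<^sup>L M (\<lambda>x. \<Sum>i\<in>UNIV. Re (\<Sum>j\<in>UNIV. f x $ i $ j * cnj (g x $ i $ j))))"
    unfolding L2_inner_def inner_matrix ..
  also have "\<dots> = (\<Sum>i\<in>UNIV. integral\<^sup>L M (\<lambda>x. Re (\<Sum>j\<in>UNIV. f x $ i $ j * cnj (g x $ i $ j))))"
    by (intro Bochner_Integration.integral_sum integrable_Re row)
  also have "\<dots> = (\<Sum>i\<in>UNIV. Re (integral\<^sup>L M (\<lambda>x. \<Sum>j\<in>UNIV. f x $ i $ j * cnj (g x $ i $ j))))"
    by (intro sum.cong refl integral_Re row)
  also have "\<dots> = Re (hip M f g)"
    by (simp add: hip_def trace_def mip_entry Re_sum)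
  finally show ?thesis by simp
qed

section \<open>Completeness\<close>

lemma geometric_sum_le:
  fixes q :: real
  assumes "0 < q" "q < 1"
  shows "(\<Sum>k\<in>{N..<m}. q ^ k) \<le> q ^ N / (1 - q)"
proof -
  have "(\<Sum>k\<in>{N..<m}. q ^ k) = q ^ N * (\<Sum>k<m - N. q ^ k)"
    by (simp add: sum.atLeastLessThan_shift_0[of _ N] power_add sum_distrib_left atLeast0LessThan)
  also have "(\<Sum>k<m - N. q ^ k) \<le> 1 / (1 - q)"
    using assms sum_le_suminf[of "\<lambda>k. q ^ k" "{..<m - N}"] suminf_geometric[of q] summable_geometric[of q]
    by auto
  finally show ?thesis using assms by (simp add: divide_right_mono mult_left_mono)
qed

lemma norm_sum_power2_le_weighted:
  fixes D :: "nat \<Rightarrow> 'a::real_normed_vector" and q :: real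
  assumes q: "0 < q" "q < 1" and summable: "summable (\<lambda>k. (norm (D k))^2 / q^k)"
  shows "(norm (\<Sum>k\<in>{N..<m}. D k))^2 \<le> q^N / (1 - q) * (\<Sum>k. (norm (D k))^2 / q^k)"
proof -
  have "(norm (\<Sum>k\<in>{N..<m}. D k))^2 \<le> (\<Sum>k\<in>{N..<m}. sqrt (q^k) * (norm (D k) / sqrt (q^k)))^2"
    using q by (simp add: power_mono norm_sum)
  also have "\<dots> \<le> (\<Sum>k\<in>{N..<m}. (sqrt (q^k))^2) * (\<Sum>k\<in>{N..<m}. (norm (D k) / sqrt (q^k))^2)"
    by (rule Cauchy_Schwarz_ineq_sum)
  also have "\<dots> = (\<Sum>k\<in>{N..<m}. q^k) * (\<Sum>k\<in>{N..<m}. (norm (D k))^2 / q^k)"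
    using q by (simp add: power_divide)
  also have "\<dots> \<le> q^N / (1 - q) * (\<Sum>k. (norm (D k))^2 / q^k)"
    using q by (intro mult_mono geometric_sum_le sum_le_suminf summable sum_nonneg) auto
  finally show ?thesis .
qed

lemma Cauchy_if_tail_bound:
  fixes X :: "nat \<Rightarrow> 'a::real_normed_vector"
  assumes tail: "\<And>N m. N \<le> m \<Longrightarrow> norm (X m - X N) \<le> b N" and "b \<longlonglongrightarrow> 0"
  shows "Cauchy X"
proof (rule CauchyI)
  fix e :: real assume "0 < e"
  with \<open>b \<longlonglongrightarrow> 0\<close> obtain K where K: "b K < e / 2"
    by (metis half_gt_zero order_tendstoD(2) eventually_sequentially order.refl)
  have "norm (X m - X n) < e" if "K \<le> m" "K \<le> n" for m n
    using norm_triangle_ineq4[of "X m - X K" "X n - X K"] tail[OF that(1)] tail[OF that(2)] K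
    by simp
  then show "\<exists>M. \<forall>m\<ge>M. \<forall>n\<ge>M. norm (X m - X n) < e"
    by blast
qed

lemma AE_summable_if_summable_integrals:
  fixes h :: "nat \<Rightarrow> 'a \<Rightarrow> real"
  assumes integrable: "\<And>N. integrable M (h N)" and nonneg: "\<And>N x. 0 \<le> h N x"
    and summable: "summable (\<lambda>N. LINT x|M. h N x)"
  shows "AE x in M. summable (\<lambda>N. h N x)" and "integrable M (\<lambda>x. \<Sum>N. h N x)"
proof -
  have h_measurable: "(\<lambda>x. ennreal (h N x)) \<in> borel_measurable M" for N
    using borel_measurable_integrable[OF integrable] by measurable
  have "(\<integral>\<^sup>+x. (\<Sum>N. ennreal (h N x)) \<partial>M) = (\<Sum>N. \<integral>\<^sup>+x. ennreal (h N x) \<partial>M)"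
    using h_measurable by (rule nn_integral_suminf)
  also have "\<dots> = (\<Sum>N. ennreal (LINT x|M. h N x))"
    by (intro suminf_cong nn_integral_eq_integral integrable AE_I2 nonneg)
  also have "\<dots> \<noteq> \<infinity>"
  proof -
    have "0 \<le> (LINT x|M. h N x)" for N
      by (rule Bochner_Integration.integral_nonneg) (rule nonneg)
    then show ?thesis
      by (metis ennreal_suminf_neq_top[OF summable] infinity_ennreal_def)
  qed
  finally have "(\<integral>\<^sup>+x. (\<Sum>N. ennreal (h N x)) \<partial>M) \<noteq> \<infinity>" .
  with h_measurable have "AE x in M. (\<Sum>N. ennreal (h N x)) \<noteq> \<infinity>"
    by (intro nn_integral_noteq_infinite borel_measurable_suminf_order)
  then show AE: "AE x in M. summable (\<lambda>N. h N x)"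
    by (rule AE_mp) (intro AE_I2 impI summable_suminf_not_top nonneg, simp)
  show "integrable M (\<lambda>x. \<Sum>N. h N x)"
    using AE summable nonneg by (intro integrable_suminf integrable) (simp_all add: abs_of_nonneg)
qed

lemma weighted_increments_summable_imp_convergent:
  fixes X :: "nat \<Rightarrow> 'a::banach" and q :: real
  assumes q: "0 < q" "q < 1" and summable: "summable (\<lambda>k. (norm (X (Suc k) - X k))^2 / q^k)"
  shows "X \<longlonglongrightarrow> lim X"
    and "(norm (lim X - X N))^2 \<le> q^N / (1 - q) * (\<Sum>k. (norm (X (Suc k) - X k))^2 / q^k)"
proof -
  define S where "S = (\<Sum>k. (norm (X (Suc k) - X k))^2 / q^k)"
  have tail: "(norm (X m - X N))^2 \<le> q^N / (1 - q) * S" if "N \<le> m" for N m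
    using norm_sum_power2_le_weighted[OF q summable, of N m] sum_Suc_diff'[OF that, of X]
    by (simp add: S_def)
  have "Cauchy X"
  proof (rule Cauchy_if_tail_bound)
    show "norm (X m - X N) \<le> sqrt (q^N / (1 - q) * S)" if "N \<le> m" for N m
      using real_sqrt_le_mono[OF tail[OF that]] by simp
    show "(\<lambda>N. sqrt (q^N / (1 - q) * S)) \<longlonglongrightarrow> 0"
      using q by (intro tendsto_eq_intros LIMSEQ_power_zero) auto
  qed
  then show X: "X \<longlonglongrightarrow> lim X"
    by (simp add: Cauchy_convergent_iff convergent_LIMSEQ_iff)
  show "(norm (lim X - X N))^2 \<le> q^N / (1 - q) * S"
    using X tail by (intro LIMSEQ_le_const2[of "\<lambda>m. (norm (X m - X N))^2"] tendsto_intros) auto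
qed

text \<open>Riesz--Fischer for sequences converging at a geometric rate: weighting the squared
  increments by \<open>q\<^sup>-\<^sup>N\<close> makes them summable pointwise almost everywhere, and Cauchy--Schwarz
  turns this into a square integrable bound on the tails.\<close>

lemma L2M_weighted_increments_AE_summable:
  fixes u :: "nat \<Rightarrow> 'g \<Rightarrow> complex^'r^'s"
  assumes u: "\<And>N. u N \<in> L2M M" and q: "0 < q" "q < 1"
    and step: "\<And>N. fnorm M (\<lambda>x. u (Suc N) x - u N x) \<le> B * q ^ N"
  shows "AE x in M. summable (\<lambda>N. (norm (u (Suc N) x - u N x))^2 / q^N)"
    and "integrable M (\<lambda>x. \<Sum>N. (norm (u (Suc N) x - u N x))^2 / q^N)"
proof -
  define D where "D N x = u (Suc N) x - u N x" for N x
  have D: "D N \<in> L2M M" for N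
    unfolding D_def by (intro L2M_diff u)
  define h where "h N x = (norm (D N x))^2 / q^N" for N x
  have h_nonneg: "0 \<le> h N x" for N x
    unfolding h_def using q by simp
  have h_integrable: "integrable M (h N)" for N
    using D[of N] unfolding L2M_iff h_def by (intro Bochner_Integration.integrable_divide) blast
  have "(LINT x|M. h N x) \<le> B^2 * q^N" for N
  proof -
    have "(fnorm M (D N))^2 \<le> (B * q^N)^2"
      using step[of N] fnorm_nonneg[OF D] unfolding D_def by (intro power_mono) auto
    then show ?thesis
      unfolding h_def using fnorm_power2[OF D] q by (simp add: field_simps power2_eq_square)
  qed
  then have "summable (\<lambda>N. LINT x|M. h N x)"
    using q h_nonneg
    by (intro summable_comparison_test'[OF summable_mult[OF summable_geometric]])
       (auto simp: integral_nonneg_AE)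
  from AE_summable_if_summable_integrals[OF h_integrable h_nonneg this]
  show "AE x in M. summable (\<lambda>N. (norm (u (Suc N) x - u N x))^2 / q^N)"
    and "integrable M (\<lambda>x. \<Sum>N. (norm (u (Suc N) x - u N x))^2 / q^N)"
    unfolding h_def D_def .
qed

lemma L2M_geometric_Cauchy_converges:
  fixes u :: "nat \<Rightarrow> 'g \<Rightarrow> complex^'r^'s"
  assumes u: "\<And>N. u N \<in> L2M M" and q: "0 < q" "q < 1"
    and step: "\<And>N. fnorm M (\<lambda>x. u (Suc N) x - u N x) \<le> B * q ^ N"
  shows "\<exists>v \<in> L2M M. (\<lambda>N. fnorm M (\<lambda>x. u N x - v x)) \<longlonglongrightarrow> 0"
proof -
  define h where "h N x = (norm (u (Suc N) x - u N x))^2 / q^N" for N x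
  have AE_summable: "AE x in M. summable (\<lambda>N. h N x)" and H: "integrable M (\<lambda>x. \<Sum>N. h N x)"
    unfolding h_def by (rule L2M_weighted_increments_AE_summable[OF u q step])+
  define v where "v x = lim (\<lambda>m. u m x)" for x
  have u_measurable: "u N \<in> borel_measurable M" for N
    using u unfolding L2M_iff by blast
  have [measurable]: "(\<lambda>x. v x - u N x) \<in> borel_measurable M" for N
    unfolding v_def using borel_measurable_lim_metric[OF u_measurable] u_measurable[of N]
    by (rule borel_measurable_diff)
  have v_tail: "AE x in M. (norm (v x - u N x))^2 \<le> q^N / (1 - q) * (\<Sum>N. h N x)" for N
    using AE_summable
  proof (rule AE_mp, intro AE_I2 impI)
    fix x assume "summable (\<lambda>N. h N x)"
    then have "summable (\<lambda>k. (norm (u (Suc k) x - u k x))^2 / q^k)"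
      by (simp add: h_def)
    from weighted_increments_summable_imp_convergent(2)[OF q this, of N]
    show "(norm (v x - u N x))^2 \<le> q^N / (1 - q) * (\<Sum>N. h N x)"
      by (simp add: v_def h_def)
  qed
  have H_tail: "integrable M (\<lambda>x. q^N / (1 - q) * (\<Sum>N. h N x))" for N
    using H by (rule Bochner_Integration.integrable_mult_right)
  have diff: "(\<lambda>x. v x - u N x) \<in> L2M M" for N
  proof -
    have "integrable M (\<lambda>x. (norm (v x - u N x))^2)"
    proof (rule Bochner_Integration.integrable_bound[OF H_tail])
      show "AE x in M. norm ((norm (v x - u N x))^2) \<le> norm (q^N / (1 - q) * (\<Sum>N. h N x))"
        using v_tail[of N] by (rule AE_mp) (intro AE_I2 impI, simp add: abs_if)
    qed measurable
    then show ?thesis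
      unfolding L2M_iff by simp
  qed
  have v: "v \<in> L2M M"
    using L2M_add[OF diff[of 0] u[of 0]] by simp
  define c where "c = (LINT x|M. (\<Sum>N. h N x)) / (1 - q)"
  have upper: "fnorm M (\<lambda>x. u N x - v x) \<le> sqrt (q^N * c)" for N
  proof -
    have "fnorm M (\<lambda>x. u N x - v x) = sqrt (LINT x|M. (norm (v x - u N x))^2)"
      using fnorm_altdef[OF L2M_diff[OF u v]] by (simp add: norm_minus_commute)
    also have "\<dots> \<le> sqrt (LINT x|M. q^N / (1 - q) * (\<Sum>N. h N x))"
      using diff[of N] H_tail[of N] v_tail[of N] unfolding L2M_iff
      by (intro real_sqrt_le_mono integral_mono_AE) simp_all
    finally show ?thesis
      by (simp add: c_def)
  qed
  have "(\<lambda>N. sqrt (q^N * c)) \<longlonglongrightarrow> sqrt (0 * c)"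
    using q by (intro tendsto_real_sqrt tendsto_mult_right LIMSEQ_power_zero) simp_all
  then have "(\<lambda>N. fnorm M (\<lambda>x. u N x - v x)) \<longlonglongrightarrow> 0"
    using fnorm_nonneg[OF L2M_diff[OF u v]] upper
    by (auto intro: tendsto_sandwich[of "\<lambda>N. 0" _ _ "\<lambda>N. sqrt (q^N * c)"])
  then show ?thesis
    using v by (rule bexI)
qed

lemma op_on_L2M: "op_on M U \<Longrightarrow> f \<in> L2M M \<Longrightarrow> U f \<in> L2M M"
  by (simp add: op_on_def)

lemma op_on_aeq: "op_on M U \<Longrightarrow> f \<in> L2M M \<Longrightarrow> g \<in> L2M M \<Longrightarrow> aeq M f g \<Longrightarrow> aeq M (U f) (U g)"
  by (simp add: op_on_def)

lemma op_linearD: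
  "op_linear M U \<Longrightarrow> f \<in> L2M M \<Longrightarrow> g \<in> L2M M \<Longrightarrow>
   aeq M (U (\<lambda>x. cscale a (f x) + g x)) (\<lambda>x. cscale a (U f x) + U g x)"
  by (simp add: op_linear_def)

lemma op_linear_diff:
  assumes "op_linear M U" and "f \<in> L2M M" and "g \<in> L2M M"
  shows "aeq M (U (\<lambda>x. f x - g x)) (\<lambda>x. U f x - U g x)"
  using op_linearD[OF assms(1,3,2), of "-1"] by (simp add: cscale_minus_one)

definition op_sum :: "('i \<Rightarrow> ('g \<Rightarrow> 'v) \<Rightarrow> 'g \<Rightarrow> 'v) \<Rightarrow> 'i set \<Rightarrow> ('g \<Rightarrow> 'v) \<Rightarrow> 'g \<Rightarrow> 'v::comm_monoid_add"
  where "op_sum A I f = (\<lambda>x. \<Sum>i\<in>I. A i f x)"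

lemma op_on_funpow: "op_on M T \<Longrightarrow> op_on M (T ^^ i)"
  by (induction i) (simp_all add: op_on_def)

lemma op_on_sum:
  fixes A :: "'i \<Rightarrow> ('g \<Rightarrow> complex^'r^'s) \<Rightarrow> 'g \<Rightarrow> complex^'r^'s"
  assumes "finite I" and "\<And>i. i \<in> I \<Longrightarrow> op_on M (A i)"
  shows "op_on M (op_sum A I)"
  unfolding op_on_def op_sum_def
proof (intro conjI ballI impI)
  fix f g :: "'g \<Rightarrow> complex^'r^'s"
  assume f: "f \<in> L2M M" and g: "g \<in> L2M M"
  show "(\<lambda>x. \<Sum>i\<in>I. A i f x) \<in> L2M M"
    by (intro L2M_sum op_on_L2M[OF assms(2)] f)
  assume "aeq M f g"
  then have "aeq M (A i f) (A i g)" if "i \<in> I" for i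
    using f g assms(2)[OF that] by (simp add: op_on_aeq)
  then show "aeq M (\<lambda>x. \<Sum>i\<in>I. A i f x) (\<lambda>x. \<Sum>i\<in>I. A i g x)"
    using \<open>finite I\<close> by (rule aeq_sum[rotated])
qed

lemma op_linear_funpow:
  fixes T :: "('g \<Rightarrow> complex^'r^'s) \<Rightarrow> 'g \<Rightarrow> complex^'r^'s"
  assumes on: "op_on M T" and lin: "op_linear M T"
  shows "op_linear M (T ^^ i)"
proof (induction i)
  case 0
  show ?case by (simp add: op_linear_def aeq_refl)
next
  case (Suc i)
  show ?case unfolding op_linear_def
  proof (intro allI impI)
    fix a and f g :: "'g \<Rightarrow> complex^'r^'s"
    assume f: "f \<in> L2M M" and g: "g \<in> L2M M"
    have Tif: "(T ^^ i) f \<in> L2M M" and Tig: "(T ^^ i) g \<in> L2M M"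
      using f g by (simp_all add: op_on_L2M op_on_funpow on)
    have "aeq M (T ((T ^^ i) (\<lambda>x. cscale a (f x) + g x))) (T (\<lambda>x. cscale a ((T ^^ i) f x) + (T ^^ i) g x))"
      using f g Tif Tig op_linearD[OF Suc.IH f g]
      by (intro op_on_aeq[OF on] op_on_L2M[OF op_on_funpow[OF on]] L2M_add L2M_cscale)
    also have "aeq M \<dots> (\<lambda>x. cscale a (T ((T ^^ i) f) x) + T ((T ^^ i) g) x)"
      by (rule op_linearD[OF lin Tif Tig])
    finally show "aeq M ((T ^^ Suc i) (\<lambda>x. cscale a (f x) + g x))
        (\<lambda>x. cscale a ((T ^^ Suc i) f x) + (T ^^ Suc i) g x)"
      by simp
  qed
qed

lemma op_linear_sum:
  fixes A :: "'i \<Rightarrow> ('g \<Rightarrow> complex^'r^'s) \<Rightarrow> 'g \<Rightarrow> complex^'r^'s"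
  assumes "finite I" and lin: "\<And>i. i \<in> I \<Longrightarrow> op_linear M (A i)"
  shows "op_linear M (op_sum A I)"
  unfolding op_linear_def
proof (intro allI impI)
  fix a and f g :: "'g \<Rightarrow> complex^'r^'s"
  assume f: "f \<in> L2M M" and g: "g \<in> L2M M"
  have "aeq M (\<lambda>x. \<Sum>i\<in>I. A i (\<lambda>x. cscale a (f x) + g x) x)
      (\<lambda>x. \<Sum>i\<in>I. cscale a (A i f x) + A i g x)"
    by (intro aeq_sum \<open>finite I\<close> op_linearD[OF lin f g])
  then show "aeq M (op_sum A I (\<lambda>x. cscale a (f x) + g x))
      (\<lambda>x. cscale a (op_sum A I f x) + op_sum A I g x)"
    by (simp add: op_sum_def cscale_sum sum.distrib)
qed

lemma op_boundedE:
  assumes "op_bounded M U"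
  obtains C where "C \<ge> 1" and "\<And>f. f \<in> L2M M \<Longrightarrow> fnorm M (U f) \<le> C * fnorm M f"
proof -
  obtain C where C: "\<And>f. f \<in> L2M M \<Longrightarrow> fnorm M (U f) \<le> C * fnorm M f"
    using assms unfolding op_bounded_def by blast
  have "fnorm M (U f) \<le> max 1 C * fnorm M f" if "f \<in> L2M M" for f
    using C[OF that] mult_right_mono[OF max.cobounded2[of C 1] fnorm_nonneg[OF that]] by linarith
  then show thesis
    by (intro that[of "max 1 C"]) simp_all
qed

lemma op_bounded_funpow:
  assumes on: "op_on M T" and "op_bounded M T"
  shows "op_bounded M (T ^^ i)"
proof -
  obtain C where C: "C \<ge> 1" and bound: "\<And>f. f \<in> L2M M \<Longrightarrow> fnorm M (T f) \<le> C * fnorm M f"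
    using op_boundedE[OF \<open>op_bounded M T\<close>] by blast
  have "fnorm M ((T ^^ i) f) \<le> C ^ i * fnorm M f" if f: "f \<in> L2M M" for f
  proof (induction i)
    case (Suc i)
    have "fnorm M ((T ^^ Suc i) f) \<le> C * fnorm M ((T ^^ i) f)"
      using f by (simp add: bound op_on_L2M op_on_funpow on)
    also have "\<dots> \<le> C * (C ^ i * fnorm M f)"
      using Suc.IH C by (simp add: mult_left_mono)
    finally show ?case
      by simp
  qed simp
  then show ?thesis
    unfolding op_bounded_def by blast
qed

lemma op_bounded_sum:
  assumes "finite I" and on: "\<And>i. i \<in> I \<Longrightarrow> op_on M (A i)"
    and bounded: "\<And>i. i \<in> I \<Longrightarrow> op_bounded M (A i)"
  shows "op_bounded M (op_sum A I)"
proof -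
  obtain C where C: "\<And>i f. i \<in> I \<Longrightarrow> f \<in> L2M M \<Longrightarrow> fnorm M (A i f) \<le> C i * fnorm M f"
    using bounded unfolding op_bounded_def by metis
  have "fnorm M (op_sum A I f) \<le> (\<Sum>i\<in>I. C i) * fnorm M f" if f: "f \<in> L2M M" for f
  proof -
    have "fnorm M (op_sum A I f) \<le> (\<Sum>i\<in>I. fnorm M (A i f))"
      unfolding op_sum_def by (intro fnorm_sum_le \<open>finite I\<close> op_on_L2M[OF on] f)
    also have "\<dots> \<le> (\<Sum>i\<in>I. C i * fnorm M f)"
      using f C by (intro sum_mono)
    finally show ?thesis
      by (simp add: sum_distrib_right)
  qed
  then show ?thesis
    unfolding op_bounded_def by blast
qed

lemma op_adjointable_funpow:
  assumes on: "op_on M T" and "op_adjointable M T"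
  shows "op_adjointable M (T ^^ i)"
proof -
  obtain V where onV: "op_on M V"
    and adj: "\<And>f g. f \<in> L2M M \<Longrightarrow> g \<in> L2M M \<Longrightarrow> mip M (T f) g = mip M f (V g)"
    using \<open>op_adjointable M T\<close> unfolding op_adjointable_def by blast
  have "mip M ((T ^^ i) f) g = mip M f ((V ^^ i) g)" if "f \<in> L2M M" "g \<in> L2M M" for f g
    using that(2)
  proof (induction i arbitrary: g)
    case (Suc i)
    have "mip M ((T ^^ Suc i) f) g = mip M ((T ^^ i) f) (V g)"
      using Suc.prems that(1) by (simp add: adj op_on_L2M op_on_funpow on)
    also have "\<dots> = mip M f ((V ^^ Suc i) g)"
      using Suc.prems by (simp add: Suc.IH op_on_L2M onV funpow_Suc_right del: funpow.simps)
    finally show ?case .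
  qed simp
  then show ?thesis
    unfolding op_adjointable_def using op_on_funpow[OF onV] by blast
qed

lemma op_adjointable_sum:
  assumes "finite I" and on: "\<And>i. i \<in> I \<Longrightarrow> op_on M (A i)"
    and adjointable: "\<And>i. i \<in> I \<Longrightarrow> op_adjointable M (A i)"
  shows "op_adjointable M (op_sum A I)"
proof -
  obtain V where onV: "\<And>i. i \<in> I \<Longrightarrow> op_on M (V i)"
    and adj: "\<And>i f g. i \<in> I \<Longrightarrow> f \<in> L2M M \<Longrightarrow> g \<in> L2M M \<Longrightarrow> mip M (A i f) g = mip M f (V i g)"
    using adjointable unfolding op_adjointable_def by metis
  have "mip M (op_sum A I f) g = mip M f (op_sum V I g)" if f: "f \<in> L2M M" and g: "g \<in> L2M M" for f g
  proof -
    have "mip M (op_sum A I f) g = (\<Sum>i\<in>I. mip M (A i f) g)"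
      unfolding op_sum_def by (intro mip_sum_left \<open>finite I\<close> op_on_L2M[OF on] f g)
    also have "\<dots> = (\<Sum>i\<in>I. mip M f (V i g))"
      using f g by (intro sum.cong refl adj)
    also have "\<dots> = mip M f (op_sum V I g)"
      unfolding op_sum_def by (intro mip_sum_right[symmetric] \<open>finite I\<close> op_on_L2M[OF onV] f g)
    finally show ?thesis .
  qed
  moreover have "op_on M (op_sum V I)"
    using \<open>finite I\<close> onV by (rule op_on_sum)
  ultimately show ?thesis
    unfolding op_adjointable_def by blast
qed

section \<open>Positive operators\<close>

lemma L2_inner_commute_if_positive:
  assumes on: "op_on M T" and pos: "op_positive M T" and f: "f \<in> L2M M" and g: "g \<in> L2M M"
  shows "L2_inner M (T f) g = L2_inner M f (T g)"
proof -
  have "hip M (T f) g = hip M f (T g)"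
    using pos f g unfolding op_positive_def by blast
  then show ?thesis
    using Re_hip_eq_L2_inner[OF op_on_L2M[OF on f] g] Re_hip_eq_L2_inner[OF f op_on_L2M[OF on g]]
    by simp
qed

lemma L2_inner_nonneg_if_positive:
  assumes on: "op_on M T" and pos: "op_positive M T" and f: "f \<in> L2M M"
  shows "0 \<le> L2_inner M (T f) f"
proof -
  have "0 \<le> Re (hip M (T f) f)"
    using pos f unfolding op_positive_def by blast
  then show ?thesis
    using Re_hip_eq_L2_inner[OF op_on_L2M[OF on f] f] by simp
qed

lemma L2_inner_funpow_commute_if_positive:
  assumes on: "op_on M T" and pos: "op_positive M T" and f: "f \<in> L2M M" and g: "g \<in> L2M M"
  shows "L2_inner M ((T ^^ k) f) g = L2_inner M f ((T ^^ k) g)"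
  using g
proof (induction k arbitrary: g)
  case (Suc k)
  have Tkf: "(T ^^ k) f \<in> L2M M"
    using f by (rule op_on_L2M[OF op_on_funpow[OF on]])
  have "L2_inner M ((T ^^ Suc k) f) g = L2_inner M ((T ^^ k) f) (T g)"
    using L2_inner_commute_if_positive[OF on pos Tkf Suc.prems] by simp
  also have "\<dots> = L2_inner M f ((T ^^ Suc k) g)"
    using Suc.IH[OF op_on_L2M[OF on Suc.prems]] by (simp only: funpow_Suc_right o_apply)
  finally show ?case .
qed simp

lemma L2_inner_funpow_nonneg_if_positive:
  assumes on: "op_on M T" and pos: "op_positive M T" and h: "h \<in> L2M M"
  shows "0 \<le> L2_inner M ((T ^^ i) h) h"
proof -
  have Tjh: "(T ^^ j) h \<in> L2M M" for j
    using h by (rule op_on_L2M[OF op_on_funpow[OF on]])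
  show ?thesis
  proof (cases "even i")
    case True
    then obtain j where "i = j + j"
      by (metis evenE mult_2)
    then have "L2_inner M ((T ^^ i) h) h = L2_inner M ((T ^^ j) ((T ^^ j) h)) h"
      by (simp only: funpow_add o_apply)
    also have "\<dots> = (fnorm M ((T ^^ j) h))^2"
      using L2_inner_funpow_commute_if_positive[OF on pos Tjh h] L2_inner_self[OF Tjh] by simp
    finally show ?thesis
      by simp
  next
    case False
    then obtain j where "i = j + Suc j"
      by (metis oddE add_Suc_right mult_2 Suc_eq_plus1)
    then have "L2_inner M ((T ^^ i) h) h = L2_inner M ((T ^^ j) (T ((T ^^ j) h))) h"
      by (simp only: funpow_add o_apply funpow.simps(2))
    also have "\<dots> = L2_inner M (T ((T ^^ j) h)) ((T ^^ j) h)"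
      using op_on_L2M[OF on Tjh] h by (rule L2_inner_funpow_commute_if_positive[OF on pos])
    finally show ?thesis
      using L2_inner_nonneg_if_positive[OF on pos Tjh] by simp
  qed
qed

lemma fnorm_power2_le_L2_inner_power_sum:
  assumes on: "op_on M T" and pos: "op_positive M T" and h: "h \<in> L2M M"
  shows "(fnorm M h)^2 \<le> L2_inner M (op_sum (\<lambda>i. T ^^ i) {..n} h) h"
proof -
  have "(fnorm M h)^2 = L2_inner M ((T ^^ 0) h) h"
    using h by (simp add: L2_inner_self)
  also have "\<dots> \<le> (\<Sum>i\<le>n. L2_inner M ((T ^^ i) h) h)"
    using L2_inner_funpow_nonneg_if_positive[OF on pos h] by (intro member_le_sum) auto
  also have "\<dots> = L2_inner M (op_sum (\<lambda>i. T ^^ i) {..n} h) h"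
    unfolding op_sum_def
    by (intro L2_inner_sum_left[symmetric] finite_atMost op_on_L2M[OF op_on_funpow[OF on]] h)
  finally show ?thesis .
qed

section \<open>Coercive operators are bijective\<close>

lemma coercive_op_inj:
  assumes on: "op_on M U" and lin: "op_linear M U"
    and coercive: "\<And>h. h \<in> L2M M \<Longrightarrow> (fnorm M h)^2 \<le> L2_inner M (U h) h"
    and f: "f \<in> L2M M" and g: "g \<in> L2M M" and eq: "aeq M (U f) (U g)"
  shows "aeq M f g"
proof -
  define h where "h = (\<lambda>x. f x - g x)"
  have h: "h \<in> L2M M"
    unfolding h_def using f g by (rule L2M_diff)
  have "aeq M (U h) (\<lambda>x. U f x - U g x)"
    unfolding h_def using lin f g by (rule op_linear_diff)
  also have "aeq M \<dots> (\<lambda>x. 0)"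
    using eq unfolding aeq_def by (rule AE_mp) simp
  finally have "L2_inner M (U h) h = L2_inner M (\<lambda>x. 0) h"
    using op_on_L2M[OF on h] L2M_zero h by (rule L2_inner_cong_left[rotated 3])
  then have "(fnorm M h)^2 \<le> 0"
    using coercive[OF h] by (simp add: L2_inner_def)
  then show ?thesis
    using aeq_if_fnorm_diff_eq_0[OF f g] by (simp add: h_def)
qed

lemma fnorm_Richardson_step:
  assumes r: "r \<in> L2M M" and Ur: "U r \<in> L2M M" and "K \<ge> 1"
    and bound: "fnorm M (U r) \<le> K * fnorm M r"
    and coercive: "(fnorm M r)^2 \<le> L2_inner M (U r) r"
  shows "fnorm M (\<lambda>x. r x - (1 / K^2) *\<^sub>R U r x) \<le> sqrt (1 - 1 / K^2) * fnorm M r"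
proof (rule power2_le_imp_le)
  define t where "t = 1 / K^2"
  have t: "0 < t" "t \<le> 1" "t^2 * K^2 = t"
    using \<open>K \<ge> 1\<close> one_le_power[of K 2] by (simp_all add: t_def power2_eq_square)
  have "(fnorm M (\<lambda>x. r x - t *\<^sub>R U r x))^2
      = (fnorm M r)^2 - 2 * t * L2_inner M r (U r) + t^2 * (fnorm M (U r))^2"
    by (rule fnorm_diff_scaleR_power2[OF r Ur])
  also have "\<dots> \<le> (fnorm M r)^2 - 2 * t * (fnorm M r)^2 + t^2 * (K * fnorm M r)^2"
  proof -
    have "(fnorm M (U r))^2 \<le> (K * fnorm M r)^2"
      using bound fnorm_nonneg[OF Ur] by (rule power_mono)
    then show ?thesis
      using coercive t L2_inner_commute[of M r "U r"]
      by (smt (verit) mult_left_mono mult_nonneg_nonneg zero_le_power2)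
  qed
  also have "\<dots> = (sqrt (1 - t) * fnorm M r)^2"
    using t by (simp add: power_mult_distrib algebra_simps)
  finally show "(fnorm M (\<lambda>x. r x - (1 / K^2) *\<^sub>R U r x))^2 \<le> (sqrt (1 - 1 / K^2) * fnorm M r)^2"
    by (simp add: t_def)
  show "0 \<le> sqrt (1 - 1 / K^2) * fnorm M r"
    using \<open>K \<ge> 1\<close> fnorm_nonneg[OF r] by simp
qed

lemma Richardson_step:
  assumes on: "op_on M U" and lin: "op_linear M U" and K: "K \<ge> 1"
    and bound: "\<And>f. f \<in> L2M M \<Longrightarrow> fnorm M (U f) \<le> K * fnorm M f"
    and coercive: "\<And>h. h \<in> L2M M \<Longrightarrow> (fnorm M h)^2 \<le> L2_inner M (U h) h"
    and g: "g \<in> L2M M" and w: "w \<in> L2M M"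
  shows "fnorm M (\<lambda>x. g x - U (\<lambda>y. w y + (1 / K^2) *\<^sub>R (g y - U w y)) x)
    \<le> sqrt (1 - 1 / K^2) * fnorm M (\<lambda>x. g x - U w x)"
proof -
  define t where "t = 1 / K^2"
  define r where "r = (\<lambda>x. g x - U w x)"
  have r: "r \<in> L2M M" and Ur: "U r \<in> L2M M"
    unfolding r_def by (intro L2M_diff g w op_on_L2M[OF on])+
  have "(\<lambda>y. w y + t *\<^sub>R (g y - U w y)) = (\<lambda>x. cscale (complex_of_real t) (r x) + w x)"
    unfolding r_def by (simp add: cscale_of_real add.commute)
  then have "aeq M (U (\<lambda>y. w y + t *\<^sub>R (g y - U w y))) (\<lambda>x. cscale (complex_of_real t) (U r x) + U w x)"
    using op_linearD[OF lin r w] by simp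
  then have "aeq M (\<lambda>x. g x - U (\<lambda>y. w y + t *\<^sub>R (g y - U w y)) x) (\<lambda>x. r x - t *\<^sub>R U r x)"
    unfolding aeq_def r_def by (rule AE_mp) (simp add: cscale_of_real algebra_simps)
  then have "fnorm M (\<lambda>x. g x - U (\<lambda>y. w y + t *\<^sub>R (g y - U w y)) x) = fnorm M (\<lambda>x. r x - t *\<^sub>R U r x)"
    by (intro fnorm_cong L2M_diff L2M_scaleR L2M_add g w r Ur op_on_L2M[OF on])
  also have "\<dots> \<le> sqrt (1 - t) * fnorm M r"
    unfolding t_def by (intro fnorm_Richardson_step r Ur K bound coercive)
  finally show ?thesis
    by (simp add: t_def r_def)
qed

lemma Richardson_iteration:
  assumes on: "op_on M U" and lin: "op_linear M U" and K: "K \<ge> 1"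
    and bound: "\<And>f. f \<in> L2M M \<Longrightarrow> fnorm M (U f) \<le> K * fnorm M f"
    and coercive: "\<And>h. h \<in> L2M M \<Longrightarrow> (fnorm M h)^2 \<le> L2_inner M (U h) h"
    and g: "g \<in> L2M M"
  shows "\<exists>q u C. 0 < q \<and> q < 1 \<and> (\<forall>N. u N \<in> L2M M) \<and>
    (\<forall>N. fnorm M (\<lambda>x. u (Suc N) x - u N x) \<le> C * q^N) \<and>
    (\<forall>N. fnorm M (\<lambda>x. g x - U (u N) x) \<le> C * q^N)"
proof -
  define t where "t = 1 / K^2"
  define q where "q = max (sqrt (1 - t)) (1 / 2)"
  have t: "0 < t" "t \<le> 1"
    using K one_le_power[of K 2] by (simp_all add: t_def)
  have q: "0 < q" "q < 1" "sqrt (1 - t) \<le> q"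
    using t by (auto simp: q_def)
  define u where "u = rec_nat (\<lambda>x. 0) (\<lambda>N uN x. uN x + t *\<^sub>R (g x - U uN x))"
  have u_Suc: "u (Suc N) = (\<lambda>x. u N x + t *\<^sub>R (g x - U (u N) x))" for N
    by (simp add: u_def)
  have u: "u N \<in> L2M M" for N
    by (induction N) (simp_all add: u_def L2M_zero L2M_add L2M_scaleR L2M_diff g op_on_L2M[OF on])
  define r where "r N = (\<lambda>x. g x - U (u N) x)" for N
  have r: "r N \<in> L2M M" for N
    unfolding r_def by (intro L2M_diff g op_on_L2M[OF on] u)
  have residual: "fnorm M (r N) \<le> fnorm M (r 0) * q^N" for N
  proof (induction N)
    case (Suc N)
    have "fnorm M (r (Suc N)) \<le> sqrt (1 - t) * fnorm M (r N)"
      unfolding r_def u_Suc t_def by (rule Richardson_step[OF on lin K bound coercive g u])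
    also have "\<dots> \<le> q * (fnorm M (r 0) * q^N)"
      using Suc.IH q fnorm_nonneg[OF r] by (intro mult_mono) auto
    finally show ?case
      by (simp add: ac_simps)
  qed simp
  have "fnorm M (\<lambda>x. u (Suc N) x - u N x) \<le> fnorm M (r 0) * q^N" for N
  proof -
    have "fnorm M (\<lambda>x. u (Suc N) x - u N x) = t * fnorm M (r N)"
      using u_Suc[of N] fnorm_scaleR[OF r, of t N] t by (simp add: r_def)
    also have "\<dots> \<le> fnorm M (r N)"
      using t fnorm_nonneg[OF r] by (simp add: mult_left_le_one_le)
    finally show ?thesis
      using residual[of N] by simp
  qed
  then show ?thesis
    using q(1,2) u residual unfolding r_def by blast
qed

lemma coercive_op_surj:
  assumes on: "op_on M U" and lin: "op_linear M U" and "op_bounded M U"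
    and coercive: "\<And>h. h \<in> L2M M \<Longrightarrow> (fnorm M h)^2 \<le> L2_inner M (U h) h"
    and g: "g \<in> L2M M"
  shows "\<exists>f \<in> L2M M. aeq M (U f) g"
proof -
  obtain K where K: "K \<ge> 1" and bound: "\<And>f. f \<in> L2M M \<Longrightarrow> fnorm M (U f) \<le> K * fnorm M f"
    using op_boundedE[OF \<open>op_bounded M U\<close>] by blast
  obtain q u C where q: "0 < q" "q < 1" and u: "\<And>N. u N \<in> L2M M"
    and step: "\<And>N. fnorm M (\<lambda>x. u (Suc N) x - u N x) \<le> C * q^N"
    and residual: "\<And>N. fnorm M (\<lambda>x. g x - U (u N) x) \<le> C * q^N"
    using Richardson_iteration[OF on lin K bound coercive g] by blast
  obtain v where v: "v \<in> L2M M" and lim: "(\<lambda>N. fnorm M (\<lambda>x. u N x - v x)) \<longlonglongrightarrow> 0"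
    using L2M_geometric_Cauchy_converges[OF u q step] by blast
  have Uv: "U v \<in> L2M M"
    by (rule op_on_L2M[OF on v])
  have "fnorm M (\<lambda>x. U v x - g x) \<le> K * fnorm M (\<lambda>x. u N x - v x) + C * q^N" for N
  proof -
    have UuN: "U (u N) \<in> L2M M"
      by (rule op_on_L2M[OF on u])
    have "fnorm M (\<lambda>x. U v x - g x) = fnorm M (\<lambda>x. (U v x - U (u N) x) + (U (u N) x - g x))"
      by simp
    also have "\<dots> \<le> fnorm M (\<lambda>x. U v x - U (u N) x) + fnorm M (\<lambda>x. g x - U (u N) x)"
      using fnorm_add_le[OF L2M_diff[OF Uv UuN] L2M_diff[OF UuN g]] fnorm_diff_commute[OF g UuN]
      by simp
    also have "fnorm M (\<lambda>x. U v x - U (u N) x) = fnorm M (U (\<lambda>x. v x - u N x))"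
      using op_linear_diff[OF lin v u]
      by (intro fnorm_cong[symmetric] op_on_L2M[OF on] L2M_diff v u Uv)
    also have "\<dots> \<le> K * fnorm M (\<lambda>x. u N x - v x)"
      using bound[OF L2M_diff[OF v u]] fnorm_diff_commute[OF v u] by simp
    finally show ?thesis
      using residual[of N] by simp
  qed
  moreover have "(\<lambda>N. K * fnorm M (\<lambda>x. u N x - v x) + C * q^N) \<longlonglongrightarrow> K * 0 + C * 0"
    using q by (intro tendsto_add tendsto_mult_left lim LIMSEQ_power_zero) simp_all
  ultimately have "fnorm M (\<lambda>x. U v x - g x) \<le> 0"
    by (intro LIMSEQ_le_const) auto
  then have "aeq M (U v) g"
    using fnorm_nonneg[OF L2M_diff[OF Uv g]] by (intro aeq_if_fnorm_diff_eq_0 Uv g) simp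
  then show ?thesis
    using v by blast
qed

lemma coercive_op_bij:
  assumes "op_on M U" and "op_linear M U" and "op_bounded M U"
    and "\<And>h. h \<in> L2M M \<Longrightarrow> (fnorm M h)^2 \<le> L2_inner M (U h) h"
  shows "op_bij M U"
  unfolding op_bij_def using assms coercive_op_inj coercive_op_surj by blast

theorem corollary3p2:
  fixes M :: "'g::{ab_group_add, metric_space} measure"
    and T :: "('g \<Rightarrow> complex^'r^'s) \<Rightarrow> ('g \<Rightarrow> complex^'r^'s)"
    and E :: "nat \<Rightarrow> ('g \<Rightarrow> complex^'r^'s)"
  assumes "lca_metrizable_sigma_compact TYPE('g)"
    and "haar_measure M"
    and "op_on M T" and "op_linear M T" and "op_bounded M T"
    and "op_positive M T" and "op_adjointable M T"
    and "mv_onb M E"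
  shows "\<forall>n::nat. mv_riesz_basis M (\<lambda>k x. \<Sum>i\<le>n. (T ^^ i) (E k) x)"
proof
  note on = \<open>op_on M T\<close> and pos = \<open>op_positive M T\<close>
  fix n :: nat
  define U where "U = op_sum (\<lambda>i. T ^^ i) {..n}"
  have powers: "op_on M (T ^^ i)" "op_linear M (T ^^ i)" "op_bounded M (T ^^ i)"
    "op_adjointable M (T ^^ i)" for i
    using assms(3-7) by (simp_all add: op_on_funpow op_linear_funpow op_bounded_funpow op_adjointable_funpow)
  have "op_on M U" "op_linear M U" "op_bounded M U" "op_adjointable M U"
    unfolding U_def using powers
    by (simp_all add: op_on_sum op_linear_sum op_bounded_sum op_adjointable_sum)
  moreover have "op_bij M U"
    using calculation(1-3) fnorm_power2_le_L2_inner_power_sum[OF on pos]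
    unfolding U_def by (rule coercive_op_bij)
  moreover have "aeq M (\<lambda>x. \<Sum>i\<le>n. (T ^^ i) (E k) x) (U (E k))" for k
    by (simp add: U_def op_sum_def aeq_refl)
  ultimately show "mv_riesz_basis M (\<lambda>k x. \<Sum>i\<le>n. (T ^^ i) (E k) x)"
    unfolding mv_riesz_basis_def using \<open>mv_onb M E\<close> by blast
qed

end
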